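(* Let $\mathcal{A}$ be a weighted pushdown system. There exists an infinite path $\pi$ from the initial configuration with $\mathrm{LimInfAvg}(\pi)\geq 0$ if and only if for every $\epsilon>0$ there exists an infinite path $\pi_\epsilon$ from the initial configuration with $\mathrm{LimInfAvg}(\pi_\epsilon)>-\epsilon$.
   Context: A weighted pushdown system (WPS) is $\mathcal{A}=\langle Q,\Gamma,q_0,E,w\rangle$ with finite states $Q$, finite stack alphabet $\Gamma\ni\bot$ ($\bot$ never pushed or popped), edges $E\subseteq(Q\times\Gamma)\times(Q\times\mathrm{Com}(\Gamma))$ with $\mathrm{Com}(\Gamma)=\{\mathit{skip},\mathit{pop}\}\cup\{\mathit{push}(z)\}$, weights $w:E\to\mathbb{Z}$; initial configuration $(\bot,q_0)$; successor of $(\alpha,q)$ via edge $(q,\mathrm{Top}(\alpha),q',\mathit{com})$ is $(\mathit{com}(\alpha),q')$. For an infinite path $\pi$, $\mathrm{LimInfAvg}(\pi)=\liminf_i w(\pi[0,i])/i$ where $w(\pi[0,i])$ is the total weight of the first $i$ edges. *)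

theory Defs
  imports "HOL-Analysis.Analysis"
begin

datatype 'g com = Skip | Pop | Push 'g

record ('q, 'g) wps =
  states :: "'q set"
  alph   :: "'g set"
  bot    :: 'g
  init   :: 'q
  edges  :: "(('q \<times> 'g) \<times> ('q \<times> 'g com)) set"
  weight :: "(('q \<times> 'g) \<times> ('q \<times> 'g com)) \<Rightarrow> int"

definition wf_wps :: "('q, 'g) wps \<Rightarrow> bool" where
  "wf_wps A \<longleftrightarrow> finite (states A) \<and> finite (alph A) \<and> bot A \<in> alph A \<and>
     init A \<in> states A \<and>
     (\<forall>((q, g), (q', c)) \<in> edges A. q \<in> states A \<and> g \<in> alph A \<and> q' \<in> states A \<and>
        (case c of Skip \<Rightarrow> True
                 | Pop \<Rightarrow> g \<noteq> bot A
                 | Push z \<Rightarrow> z \<in> alph A \<and> z \<noteq> bot A))"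

text \<open>Stacks are lists with the top at the head; the initial stack is [bot].\<close>
fun apply_com :: "'g com \<Rightarrow> 'g list \<Rightarrow> 'g list" where
  "apply_com Skip s = s"
| "apply_com Pop s = tl s"
| "apply_com (Push z) s = z # s"

type_synonym ('q, 'g) config = "'g list \<times> 'q"

definition init_config :: "('q, 'g) wps \<Rightarrow> ('q, 'g) config" where
  "init_config A = ([bot A], init A)"

definition is_path :: "('q, 'g) wps \<Rightarrow> (nat \<Rightarrow> ('q, 'g) config)
      \<Rightarrow> (nat \<Rightarrow> ('q \<times> 'g) \<times> ('q \<times> 'g com)) \<Rightarrow> bool" where
  "is_path A c e \<longleftrightarrow> c 0 = init_config A \<and>
     (\<forall>i. e i \<in> edges A \<and>
          fst (fst (e i)) = snd (c i) \<and> snd (fst (e i)) = hd (fst (c i)) \<and>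
          c (Suc i) = (apply_com (snd (snd (e i))) (fst (c i)), fst (snd (e i))))"

definition path_weight :: "('q, 'g) wps \<Rightarrow> (nat \<Rightarrow> ('q \<times> 'g) \<times> ('q \<times> 'g com)) \<Rightarrow> nat \<Rightarrow> int" where
  "path_weight A e i = (\<Sum>j<i. weight A (e j))"

definition LimInfAvg :: "('q, 'g) wps \<Rightarrow> (nat \<Rightarrow> ('q \<times> 'g) \<times> ('q \<times> 'g com)) \<Rightarrow> ereal" where
  "LimInfAvg A e = liminf (\<lambda>i. ereal (real_of_int (path_weight A e i) / real i))"

end

theory Submission
  imports Defs
begin

(* For the converse take, for every n, a
   path pi_n with LimInfAvg > -1/(n+1).  Call a position a of a path stable if the stack
   never becomes shorter than at a afterwards; every path has infinitely many stable
   positions.  From a stable position on, a path never touches the stack below the current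
   top symbol, so its continuation is a "segment" that can be replayed on top of any stack
   with the same state and top symbol.  Since there are only finitely many (state, top)
   pairs, some pair T occurs at infinitely many stable positions of infinitely many pi_n.
   We glue a path together from pieces of these paths, the k-th piece running between two
   stable positions of type T in a path with LimInfAvg > -1/(k+1), and make the k-th piece
   so long that the bounded start-up losses of all earlier pieces become negligible. *)

type_synonym ('q, 'g) edge = "('q \<times> 'g) \<times> ('q \<times> 'g com)"

definition consistent :: "('q, 'g) wps \<Rightarrow> (nat \<Rightarrow> ('q, 'g) config) \<Rightarrow> (nat \<Rightarrow> ('q, 'g) edge) \<Rightarrow> bool"
  where "consistent A c e \<longleftrightarrow> (\<forall>i. e i \<in> edges A \<and>
     fst (fst (e i)) = snd (c i) \<and> snd (fst (e i)) = hd (fst (c i)) \<and>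
     c (Suc i) = (apply_com (snd (snd (e i))) (fst (c i)), fst (snd (e i))))"

lemma is_path_iff_consistent: "is_path A c e \<longleftrightarrow> c 0 = init_config A \<and> consistent A c e"
  by (simp add: is_path_def consistent_def)

lemma consistent_shift: "consistent A c e \<Longrightarrow> consistent A (\<lambda>m. c (a + m)) (\<lambda>m. e (a + m))"
  by (simp add: consistent_def)

lemma consistent_edge_source: "consistent A c e \<Longrightarrow> fst (e i) = (snd (c i), hd (fst (c i)))"
  unfolding consistent_def by (metis prod.collapse)

lemma apply_com_append: "Y \<noteq> [] \<Longrightarrow> apply_com x (Y @ R) = apply_com x Y @ R"
  by (cases x) auto

text \<open>In a well-formed system the bottom symbol is never popped, so every stack on a path
  ends with it and in particular is never empty.\<close>
lemma path_stack_ends_with_bot: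
  assumes wf: "wf_wps A" and path: "is_path A c e"
  shows "\<exists>Y. fst (c i) = Y @ [bot A]"
proof (induction i)
  case 0
  then show ?case using path by (auto simp: is_path_def init_config_def)
next
  case (Suc i)
  then obtain Y where Y: "fst (c i) = Y @ [bot A]" by blast
  obtain q g q' x where ei: "e i = ((q, g), (q', x))" by (metis prod.collapse)
  have "e i \<in> edges A" "snd (fst (e i)) = hd (fst (c i))"
    "c (Suc i) = (apply_com (snd (snd (e i))) (fst (c i)), fst (snd (e i)))"
    using path unfolding is_path_def by blast+
  then have e: "e i \<in> edges A" "g = hd (fst (c i))" "c (Suc i) = (apply_com x (fst (c i)), q')"
    using ei by simp_all
  have pop_ok: "x = Pop \<Longrightarrow> g \<noteq> bot A" using wf e(1) ei unfolding wf_wps_def by fastforce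
  show ?case
  proof (cases x)
    case Pop
    then have "Y \<noteq> []" using pop_ok e(2) Y by auto
    then show ?thesis using e(3) Y Pop by (cases Y) auto
  qed (use e(3) Y in auto)
qed

lemma path_stack_nonempty: "wf_wps A \<Longrightarrow> is_path A c e \<Longrightarrow> fst (c i) \<noteq> []"
  using path_stack_ends_with_bot[of A c e i] by force

definition stable :: "(nat \<Rightarrow> ('q, 'g) config) \<Rightarrow> nat \<Rightarrow> bool" where
  "stable c a \<longleftrightarrow> (\<forall>k\<ge>a. length (fst (c a)) \<le> length (fst (c k)))"

text \<open>Beyond any i, the first position where the minimal stack height after i is attained
  is stable.\<close>
lemma infinite_stable: "infinite {a. stable c a}"
  unfolding infinite_nat_iff_unbounded_le
proof
  fix i
  define h where "h = (LEAST x. \<exists>k\<ge>i. length (fst (c k)) = x)"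
  have "\<exists>k\<ge>i. length (fst (c k)) = h" unfolding h_def by (rule LeastI_ex) blast
  then obtain a where a: "a \<ge> i" "length (fst (c a)) = h" by blast
  have "stable c a" unfolding stable_def
  proof (intro allI impI)
    fix k assume "a \<le> k"
    then have "\<exists>k'\<ge>i. length (fst (c k')) = length (fst (c k))"
      using a by (intro exI[of _ k]) auto
    then show "length (fst (c a)) \<le> length (fst (c k))" unfolding a(2) h_def by (rule Least_le)
  qed
  then show "\<exists>j\<ge>i. j \<in> {a. stable c a}" using a by blast
qed

text \<open>The initial stack [bot] is the shortest possible, so position 0 is stable.\<close>
lemma stable_0:
  assumes "wf_wps A" "is_path A c e"
  shows "stable c 0"
proof -
  have "fst (c 0) = [bot A]" using assms(2) by (simp add: is_path_def init_config_def)
  then show ?thesis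
    using path_stack_nonempty[OF assms] unfolding stable_def by (simp add: Suc_leI)
qed

text \<open>A segment is a consistent run starting from a nonempty stack whose height never drops
  below the initial one: it only ever inspects the top symbol of its initial stack.\<close>
definition segment :: "('q, 'g) wps \<Rightarrow> (nat \<Rightarrow> ('q, 'g) config) \<Rightarrow> (nat \<Rightarrow> ('q, 'g) edge) \<Rightarrow> bool"
  where "segment A c e \<longleftrightarrow> consistent A c e \<and> fst (c 0) \<noteq> [] \<and>
     (\<forall>m. length (fst (c 0)) \<le> length (fst (c m)))"

lemma segment_from_stable:
  assumes "wf_wps A" "is_path A c e" "stable c a"
  shows "segment A (\<lambda>m. c (a + m)) (\<lambda>m. e (a + m))"
  using assms path_stack_nonempty[OF assms(1,2)] consistent_shift
  by (auto simp: segment_def stable_def is_path_iff_consistent)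

lemma segment_step:
  assumes seg: "segment A c e" and Y: "fst (c m) = Y @ tl (fst (c 0))" "Y \<noteq> []"
  shows "fst (c (Suc m)) = apply_com (snd (snd (e m))) Y @ tl (fst (c 0)) \<and>
         apply_com (snd (snd (e m))) Y \<noteq> []"
proof -
  have c0: "fst (c 0) \<noteq> []" and len: "length (fst (c 0)) \<le> length (fst (c (Suc m)))"
    and succ: "c (Suc m) = (apply_com (snd (snd (e m))) (fst (c m)), fst (snd (e m)))"
    using seg unfolding segment_def consistent_def by blast+
  have eq: "fst (c (Suc m)) = apply_com (snd (snd (e m))) Y @ tl (fst (c 0))"
    using succ Y by (simp add: apply_com_append)
  moreover have "apply_com (snd (snd (e m))) Y \<noteq> []"
  proof (cases "snd (snd (e m))")
    case Pop
    have "length (fst (c 0)) = Suc (length (tl (fst (c 0))))" using c0 by (cases "fst (c 0)") auto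
    moreover have "length (fst (c (Suc m))) = length (tl Y) + length (tl (fst (c 0)))"
      using eq Pop by simp
    ultimately show ?thesis using len Pop by (cases "tl Y") auto
  qed (use Y(2) in auto)
  ultimately show ?thesis by blast
qed

lemma path_weight_0 [simp]: "path_weight A e 0 = 0"
  by (simp add: path_weight_def)

lemma path_weight_Suc: "path_weight A e (Suc i) = path_weight A e i + weight A (e i)"
  by (simp add: path_weight_def)

lemma path_weight_shift:
  "path_weight A (\<lambda>m. e (a + m)) x = path_weight A e (a + x) - path_weight A e a"
  by (induction x) (simp_all add: path_weight_Suc)

text \<open>Gluing.  Given lengths l k > 0, block_pos l t = (k, m) says that time t is the m-th
  step of block k; glue es l runs the first l k edges of es k in block k.\<close>
fun block_pos :: "(nat \<Rightarrow> nat) \<Rightarrow> nat \<Rightarrow> nat \<times> nat" where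
  "block_pos l 0 = (0, 0)"
| "block_pos l (Suc t) =
     (case block_pos l t of (k, m) \<Rightarrow> if Suc m < l k then (k, Suc m) else (Suc k, 0))"

definition glue :: "(nat \<Rightarrow> nat \<Rightarrow> 'e) \<Rightarrow> (nat \<Rightarrow> nat) \<Rightarrow> nat \<Rightarrow> 'e" where
  "glue es l t = (case block_pos l t of (k, m) \<Rightarrow> es k m)"

lemma block_pos_bounds:
  assumes pos: "\<And>k. 0 < l k" and "block_pos l t = (k, m)"
  shows "m < l k \<and> t = (\<Sum>j<k. l j) + m"
  using assms(2)
proof (induction t arbitrary: k m)
  case 0
  then show ?case using pos by auto
next
  case (Suc t)
  obtain k' m' where bp: "block_pos l t = (k', m')" by fastforce
  with Suc.IH have "m' < l k'" "t = (\<Sum>j<k'. l j) + m'" by auto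
  then show ?case using Suc.prems bp pos[of "Suc k'"] by (auto split: if_splits)
qed

lemma block_pos_Suc_within: "block_pos l t = (k, m) \<Longrightarrow> Suc m < l k \<Longrightarrow> block_pos l (Suc t) = (k, Suc m)"
  by simp

lemma block_pos_Suc_next:
  assumes pos: "\<And>k. 0 < l k" and bp: "block_pos l t = (k, m)" and "\<not> Suc m < l k"
  shows "l k = Suc m \<and> block_pos l (Suc t) = (Suc k, 0)"
proof
  show "l k = Suc m" using block_pos_bounds[OF pos bp] assms(3) by simp
  show "block_pos l (Suc t) = (Suc k, 0)" using bp assms(3) by simp
qed

lemma glue_weight:
  assumes pos: "\<And>k. 0 < l k" and "block_pos l t = (k, m)"
  shows "path_weight A (glue es l) t = (\<Sum>j<k. path_weight A (es j) (l j)) + path_weight A (es k) m"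
  using assms(2)
proof (induction t arbitrary: k m)
  case 0
  then show ?case by simp
next
  case (Suc t)
  obtain k' m' where bp: "block_pos l t = (k', m')" by fastforce
  have IH: "path_weight A (glue es l) t = (\<Sum>j<k'. path_weight A (es j) (l j)) + path_weight A (es k') m'"
    using Suc.IH[OF bp] .
  have step: "path_weight A (glue es l) (Suc t) =
      (\<Sum>j<k'. path_weight A (es j) (l j)) + path_weight A (es k') (Suc m')"
    using IH bp by (simp add: path_weight_Suc glue_def)
  show ?case
  proof (cases "Suc m' < l k'")
    case True
    then show ?thesis using Suc.prems block_pos_Suc_within[OF bp] step by simp
  next
    case False
    then show ?thesis using Suc.prems block_pos_Suc_next[OF pos bp] step by simp
  qed
qed

primrec run_of :: "('q, 'g) wps \<Rightarrow> (nat \<Rightarrow> ('q, 'g) edge) \<Rightarrow> nat \<Rightarrow> ('q, 'g) config" where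
  "run_of A e 0 = init_config A"
| "run_of A e (Suc t) = (apply_com (snd (snd (e t))) (fst (run_of A e t)), fst (snd (e t)))"

lemma glue_config:
  assumes seg: "\<And>k. segment A (cs k) (es k)" and pos: "\<And>k. 0 < l k"
    and init: "cs 0 0 = init_config A"
    and link: "\<And>k. snd (cs k (l k)) = snd (cs (Suc k) 0) \<and>
                    hd (fst (cs k (l k))) = hd (fst (cs (Suc k) 0))"
    and "block_pos l t = (k, m)"
  shows "\<exists>Y R. Y \<noteq> [] \<and> fst (cs k m) = Y @ tl (fst (cs k 0)) \<and>
               run_of A (glue es l) t = (Y @ R, snd (cs k m))"
  using assms(5)
proof (induction t arbitrary: k m)
  case 0
  then show ?case using init by (auto simp: init_config_def intro!: exI[of _ "[bot A]"])
next
  case (Suc t)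
  obtain k' m' where bp: "block_pos l t = (k', m')" by fastforce
  from Suc.IH[OF bp] obtain Y R where Y: "Y \<noteq> []" "fst (cs k' m') = Y @ tl (fst (cs k' 0))"
    and run: "run_of A (glue es l) t = (Y @ R, snd (cs k' m'))" by blast
  define Y' where "Y' = apply_com (snd (snd (es k' m'))) Y"
  have Y': "fst (cs k' (Suc m')) = Y' @ tl (fst (cs k' 0))" "Y' \<noteq> []"
    using segment_step[OF seg Y(2,1)] by (auto simp: Y'_def)
  have "cs k' (Suc m') = (apply_com (snd (snd (es k' m'))) (fst (cs k' m')), fst (snd (es k' m')))"
    using seg[of k'] unfolding segment_def consistent_def by blast
  then have run': "run_of A (glue es l) (Suc t) = (Y' @ R, snd (cs k' (Suc m')))"
    using run Y bp by (simp add: glue_def Y'_def apply_com_append)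
  show ?case
  proof (cases "Suc m' < l k'")
    case True
    then show ?thesis using Suc.prems block_pos_Suc_within[OF bp] Y' run' by auto
  next
    case False
    then have lk: "l k' = Suc m'" and km: "k = Suc k'" "m = 0"
      using block_pos_Suc_next[OF pos bp] Suc.prems by auto
    define g where "g = hd (fst (cs (Suc k') 0))"
    have "fst (cs (Suc k') 0) \<noteq> []" using seg[of "Suc k'"] unfolding segment_def by blast
    then have "fst (cs (Suc k') 0) = [g] @ tl (fst (cs (Suc k') 0))" by (simp add: g_def)
    moreover have "hd Y' = g" using link[of k'] Y' lk by (simp add: g_def)
    then have "run_of A (glue es l) (Suc t) = ([g] @ (tl Y' @ R), snd (cs (Suc k') 0))"
      using run' Y'(2) link[of k'] lk by (cases Y') auto
    ultimately show ?thesis using km by blast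
  qed
qed

lemma glue_is_path:
  assumes seg: "\<And>k. segment A (cs k) (es k)" and pos: "\<And>k. 0 < l k"
    and init: "cs 0 0 = init_config A"
    and link: "\<And>k. snd (cs k (l k)) = snd (cs (Suc k) 0) \<and>
                    hd (fst (cs k (l k))) = hd (fst (cs (Suc k) 0))"
  shows "is_path A (run_of A (glue es l)) (glue es l)"
  unfolding is_path_iff_consistent consistent_def
proof (intro conjI allI)
  fix i
  obtain k m where bp: "block_pos l i = (k, m)" by fastforce
  from glue_config[OF seg pos init link bp] obtain Y R where
    Y: "Y \<noteq> []" "fst (cs k m) = Y @ tl (fst (cs k 0))"
    and run: "run_of A (glue es l) i = (Y @ R, snd (cs k m))" by blast
  have E: "glue es l i = es k m" using bp by (simp add: glue_def)
  have "es k m \<in> edges A \<and> fst (fst (es k m)) = snd (cs k m) \<and> snd (fst (es k m)) = hd (fst (cs k m))"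
    using seg[of k] unfolding segment_def consistent_def by blast
  then show "glue es l i \<in> edges A" "fst (fst (glue es l i)) = snd (run_of A (glue es l) i)"
    "snd (fst (glue es l i)) = hd (fst (run_of A (glue es l) i))"
    using E run Y by auto
qed simp_all

lemma liminf_avg_lower_line:
  assumes "LimInfAvg A e > ereal (- \<epsilon>)" "0 \<le> \<epsilon>"
  shows "\<exists>D\<ge>0. \<forall>m. - \<epsilon> * m - D \<le> real_of_int (path_weight A e m)"
proof -
  have "eventually (\<lambda>i. ereal (- \<epsilon>) < ereal (real_of_int (path_weight A e i) / real i)) sequentially"
    using assms(1) unfolding LimInfAvg_def by (rule less_LiminfD)
  then obtain N where N: "\<And>i. N \<le> i \<Longrightarrow> - \<epsilon> < real_of_int (path_weight A e i) / real i"
    unfolding eventually_sequentially by auto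
  define D where "D = (\<Sum>i<N. \<bar>real_of_int (path_weight A e i)\<bar>)"
  have "D \<ge> 0" unfolding D_def by (simp add: sum_nonneg)
  have "- \<epsilon> * m - D \<le> real_of_int (path_weight A e m)" for m
  proof (cases "N \<le> m \<and> 0 < m")
    case True
    then have "- \<epsilon> * m < real_of_int (path_weight A e m)"
      using N[of m] by (simp add: field_simps)
    then show ?thesis using \<open>D \<ge> 0\<close> by linarith
  next
    case False
    then have "\<bar>real_of_int (path_weight A e m)\<bar> \<le> D"
      unfolding D_def by (cases "m = 0") (auto intro: member_le_sum)
    moreover have "0 \<le> \<epsilon> * m" using assms(2) by simp
    ultimately show ?thesis by linarith
  qed
  then show ?thesis using \<open>D \<ge> 0\<close> by blast
qed

lemma suffix_lower_line:
  assumes "LimInfAvg A e > ereal (- \<epsilon>)" "0 \<le> \<epsilon>" "\<epsilon> \<le> \<epsilon>'"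
  shows "\<exists>D\<ge>0. \<forall>x. - (real x * \<epsilon>') - D \<le> real_of_int (path_weight A (\<lambda>m. e (a + m)) x)"
proof -
  obtain D0 where D0: "D0 \<ge> 0" "\<And>m. - \<epsilon> * m - D0 \<le> real_of_int (path_weight A e m)"
    using liminf_avg_lower_line[OF assms(1,2)] by blast
  define D where "D = \<epsilon> * a + D0 + \<bar>real_of_int (path_weight A e a)\<bar>"
  have "- (real x * \<epsilon>') - D \<le> real_of_int (path_weight A (\<lambda>m. e (a + m)) x)" for x
  proof -
    have "real x * \<epsilon> \<le> real x * \<epsilon>'" using assms by (intro mult_left_mono) auto
    then show ?thesis using D0(2)[of "a + x"]
      unfolding path_weight_shift D_def by (simp add: algebra_simps)
  qed
  moreover have "D \<ge> 0" unfolding D_def using D0 assms by simp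
  ultimately show ?thesis by blast
qed

lemma liminf_avg_nonneg:
  assumes "\<And>\<delta>. \<delta> > 0 \<Longrightarrow> eventually (\<lambda>t. - \<delta> * real t \<le> real_of_int (path_weight A e t)) sequentially"
  shows "0 \<le> LimInfAvg A e"
  unfolding LimInfAvg_def le_Liminf_iff
proof (intro allI impI)
  fix y :: ereal assume y: "y < 0"
  show "eventually (\<lambda>x. y < ereal (real_of_int (path_weight A e x) / real x)) sequentially"
  proof (cases y)
    case (real r)
    then have r: "r < 0" using y by simp
    have "eventually (\<lambda>t. - (- r / 2) * real t \<le> real_of_int (path_weight A e t)) sequentially"
      using r by (intro assms) simp
    moreover have "eventually (\<lambda>t. (1::nat) \<le> t) sequentially" by (rule eventually_ge_at_top)
    ultimately show ?thesis
    proof eventually_elim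
      case (elim t)
      then have "r / 2 \<le> real_of_int (path_weight A e t) / real t" by (simp add: field_simps)
      moreover have "r < r / 2" using r by simp
      ultimately have "r < real_of_int (path_weight A e t) / real t" by linarith
      then show ?case using real by simp
    qed
  next
    case MInf
    then show ?thesis by simp
  next
    case PInf
    then show ?thesis using y by simp
  qed
qed

lemma discounted_length_le:
  fixes l :: "nat \<Rightarrow> nat"
  assumes "K \<le> k"
  shows "(\<Sum>j<k. real (l j) / real (Suc j)) + real m / real (Suc k)
           \<le> (\<Sum>j<K. real (l j) / real (Suc j)) + ((\<Sum>j<k. real (l j)) + real m) / real (Suc K)"
proof -
  have split: "(\<Sum>j<k. real (l j) / real (Suc j)) =
      (\<Sum>j<K. real (l j) / real (Suc j)) + (\<Sum>j\<in>{K..<k}. real (l j) / real (Suc j))"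
    using assms by (simp add: lessThan_atLeast0 sum.atLeastLessThan_concat)
  have "(\<Sum>j\<in>{K..<k}. real (l j) / real (Suc j)) \<le> (\<Sum>j\<in>{K..<k}. real (l j) / real (Suc K))"
    by (intro sum_mono divide_left_mono) auto
  also have "\<dots> \<le> (\<Sum>j<k. real (l j)) / real (Suc K)"
    unfolding sum_divide_distrib[symmetric] by (intro divide_right_mono sum_mono2) auto
  finally have tail: "(\<Sum>j\<in>{K..<k}. real (l j) / real (Suc j)) \<le> (\<Sum>j<k. real (l j)) / real (Suc K)" .
  have "real m / real (Suc k) \<le> real m / real (Suc K)"
    using assms by (intro divide_left_mono) auto
  then show ?thesis using split tail by (simp add: add_divide_distrib)
qed

lemma offsets_le:
  fixes l :: "nat \<Rightarrow> nat" and D :: "nat \<Rightarrow> real"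
  assumes Dnn: "\<And>j. 0 \<le> D j"
    and long: "\<And>k. real (Suc k) * (\<Sum>j<Suc (Suc k). D j) \<le> real (l k)"
    and "0 < k"
  shows "(\<Sum>j<Suc k. D j) \<le> (\<Sum>j<k. real (l j)) / real k"
proof -
  obtain k' where k: "k = Suc k'" using assms(3) by (cases k) auto
  have "real k * (\<Sum>j<Suc k. D j) \<le> real (l k')" using long[of k'] k by simp
  also have "\<dots> \<le> (\<Sum>j<k. real (l j))" using k by (intro member_le_sum) auto
  finally show ?thesis using assms(3) by (simp add: field_simps mult.commute)
qed

lemma concatenation_lower_bound:
  fixes l :: "nat \<Rightarrow> nat" and D :: "nat \<Rightarrow> real" and pw :: "nat \<Rightarrow> nat \<Rightarrow> real"
  assumes Dnn: "\<And>j. 0 \<le> D j"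
    and pw: "\<And>j x. - (real x / real (Suc j)) - D j \<le> pw j x"
    and long: "\<And>k. real (Suc k) * (\<Sum>j<Suc (Suc k). D j) \<le> real (l k)"
    and \<delta>: "0 < \<delta>"
  shows "\<exists>N. \<forall>k m. m < l k \<longrightarrow> N \<le> (\<Sum>j<k. l j) + m \<longrightarrow>
           - \<delta> * real ((\<Sum>j<k. l j) + m) \<le> (\<Sum>j<k. pw j (l j)) + pw k m"
proof -
  define K where "K = nat \<lceil>3 / \<delta>\<rceil> + 1"
  have K: "0 < K" "1 / real K \<le> \<delta> / 3"
  proof -
    show "0 < K" by (simp add: K_def)
    moreover have "3 / \<delta> \<le> real K" unfolding K_def by linarith
    ultimately show "1 / real K \<le> \<delta> / 3" using \<delta> by (simp add: field_simps)
  qed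
  define P where "P = (\<Sum>j<K. real (l j) / real (Suc j))"
  define N where "N = max (\<Sum>j<K. l j) (nat \<lceil>3 * P / \<delta>\<rceil>)"
  have "- \<delta> * real t \<le> (\<Sum>j<k. pw j (l j)) + pw k m"
    if m: "m < l k" and t: "t = (\<Sum>j<k. l j) + m" "N \<le> t" for k m t
  proof -
    have rt: "real t = (\<Sum>j<k. real (l j)) + real m" using t(1) by simp
    have "K \<le> k"
    proof (rule ccontr)
      assume "\<not> K \<le> k"
      then have "(\<Sum>j<Suc k. l j) \<le> (\<Sum>j<K. l j)" by (intro sum_mono2) auto
      then show False using m t unfolding N_def by simp
    qed
    have "(\<Sum>j<k. pw j (l j)) + pw k m \<ge>
        (\<Sum>j<k. - (real (l j) / real (Suc j)) - D j) + (- (real m / real (Suc k)) - D k)"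
      by (intro add_mono sum_mono pw)
    then have lower: "(\<Sum>j<k. pw j (l j)) + pw k m \<ge>
        - ((\<Sum>j<k. real (l j) / real (Suc j)) + real m / real (Suc k)) - (\<Sum>j<Suc k. D j)"
      by (simp add: sum_subtractf sum_negf)
    have tK: "real t / real K \<le> \<delta> / 3 * real t"
      using mult_left_mono[OF K(2), of "real t"] by (simp add: mult.commute)
    have "(\<Sum>j<k. real (l j) / real (Suc j)) + real m / real (Suc k) \<le> P + real t / real (Suc K)"
      unfolding P_def rt by (rule discounted_length_le[OF \<open>K \<le> k\<close>])
    also have "\<dots> \<le> P + real t / real K" using K(1) by (simp add: divide_left_mono)
    finally have disc: "(\<Sum>j<k. real (l j) / real (Suc j)) + real m / real (Suc k) \<le> P + \<delta> / 3 * real t"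
      using tK by linarith
    have "(\<Sum>j<Suc k. D j) \<le> (\<Sum>j<k. real (l j)) / real k"
      using offsets_le[OF Dnn long, of k] K(1) \<open>K \<le> k\<close> by simp
    also have "\<dots> \<le> real t / real k" using rt by (simp add: divide_right_mono)
    also have "\<dots> \<le> real t / real K" using K(1) \<open>K \<le> k\<close> by (intro divide_left_mono) auto
    finally have offs: "(\<Sum>j<Suc k. D j) \<le> \<delta> / 3 * real t" using tK by linarith
    have "P \<le> \<delta> / 3 * real t" using t(2) \<delta> unfolding N_def by (simp add: field_simps)
    then show ?thesis using lower disc offs by linarith
  qed
  then show ?thesis by blast
qed

lemma glue_liminf_avg_nonneg:
  assumes pos: "\<And>k. 0 < l k" and Dnn: "\<And>j. 0 \<le> D j"
    and pw: "\<And>j x. - (real x / real (Suc j)) - D j \<le> real_of_int (path_weight A (es j) x)"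
    and long: "\<And>k. real (Suc k) * (\<Sum>j<Suc (Suc k). D j) \<le> real (l k)"
  shows "0 \<le> LimInfAvg A (glue es l)"
proof (rule liminf_avg_nonneg)
  fix \<delta> :: real assume "0 < \<delta>"
  from concatenation_lower_bound[OF Dnn pw long this] obtain N where N:
    "\<And>k m. m < l k \<Longrightarrow> N \<le> (\<Sum>j<k. l j) + m \<Longrightarrow>
       - \<delta> * real ((\<Sum>j<k. l j) + m) \<le>
       (\<Sum>j<k. real_of_int (path_weight A (es j) (l j))) + real_of_int (path_weight A (es k) m)"
    by blast
  show "eventually (\<lambda>t. - \<delta> * real t \<le> real_of_int (path_weight A (glue es l) t)) sequentially"
    unfolding eventually_sequentially
  proof (intro exI allI impI)
    fix t assume "N \<le> t"
    obtain k m where bp: "block_pos l t = (k, m)" by fastforce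
    show "- \<delta> * real t \<le> real_of_int (path_weight A (glue es l) t)"
      using N block_pos_bounds[OF pos bp] \<open>N \<le> t\<close>
      unfolding glue_weight[OF pos bp] by simp
  qed
qed

lemma finite_edge_sources: "wf_wps A \<Longrightarrow> finite (fst ` edges A)"
  unfolding wf_wps_def
  by (rule finite_subset[of _ "states A \<times> alph A"]) fastforce+

lemma recurrent_stable_source:
  assumes wf: "wf_wps A" and path: "is_path A c e"
  shows "\<exists>T \<in> fst ` edges A. infinite {a. stable c a \<and> fst (e a) = T}"
proof -
  have src: "fst (e a) \<in> fst ` edges A" for a using path unfolding is_path_def by blast
  have "finite ((\<lambda>a. fst (e a)) ` {a. stable c a})"
    by (rule finite_subset[OF _ finite_edge_sources[OF wf]]) (use src in auto)
  from pigeonhole_infinite[OF infinite_stable this] obtain a0 where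
    "infinite {a \<in> {a. stable c a}. fst (e a) = fst (e a0)}" by blast
  then have "infinite {a. stable c a \<and> fst (e a) = fst (e a0)}" by simp
  then show ?thesis using src[of a0] by blast
qed

lemma pigeonhole_subsequence:
  fixes f :: "nat \<Rightarrow> 'a"
  assumes "finite S" "\<And>n. f n \<in> S"
  shows "\<exists>x g. \<forall>k. k \<le> g k \<and> f (g k) = x"
proof -
  have "finite (range f)" using assms by (metis finite_subset image_subsetI)
  from pigeonhole_infinite[OF infinite_UNIV_nat this] obtain n0 where
    "infinite {n \<in> UNIV. f n = f n0}" by blast
  then have "\<forall>k. \<exists>n. k \<le> n \<and> f n = f n0" unfolding infinite_nat_iff_unbounded_le by auto
  then show ?thesis by metis
qed

lemma infinite_nat_beyond:
  fixes B :: real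
  assumes "infinite (S :: nat set)"
  shows "\<exists>x. 0 < x \<and> B \<le> real x \<and> a + x \<in> S"
proof -
  obtain b where "b \<in> S" "a + 1 + nat \<lceil>B\<rceil> \<le> b"
    using assms unfolding infinite_nat_iff_unbounded_le by blast
  then show ?thesis by (intro exI[of _ "b - a"]) (auto simp: of_nat_diff, linarith)
qed

lemma glue_recurrent_paths:
  assumes wf: "wf_wps A"
    and path: "\<And>k. is_path A (c k) (e k)"
    and good: "\<And>k. ereal (- (1 / real (Suc k))) < LimInfAvg A (e k)"
    and recur: "\<And>k. infinite {a. stable (c k) a \<and> fst (e k a) = T}"
  shows "\<exists>c e. is_path A c e \<and> 0 \<le> LimInfAvg A e"
proof -
  define S where "S k = {a. stable (c k) a \<and> fst (e k a) = T}" for k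
  define a where "a k = (if k = 0 then 0 else SOME b. b \<in> S k)" for k
  have aS: "a (Suc k) \<in> S (Suc k)" for k
  proof -
    have "S (Suc k) \<noteq> {}" using recur[of "Suc k"] unfolding S_def by (metis finite.emptyI)
    then show ?thesis unfolding a_def by (simp add: some_in_eq)
  qed
  have "stable (c k) (a k)" for k
    using aS[of "k - 1"] stable_0[OF wf path] unfolding S_def a_def by (cases k) auto
  define cs where "cs k m = c k (a k + m)" for k m
  define es where "es k m = e k (a k + m)" for k m
  have seg: "segment A (cs k) (es k)" for k
    unfolding cs_def es_def by (rule segment_from_stable[OF wf path]) fact
  have "\<forall>j. \<exists>D\<ge>0. \<forall>x. - (real x / real (Suc j)) - D \<le> real_of_int (path_weight A (es j) x)"
  proof
    fix j
    show "\<exists>D\<ge>0. \<forall>x. - (real x / real (Suc j)) - D \<le> real_of_int (path_weight A (es j) x)"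
      using suffix_lower_line[OF good[of j] _ order_refl, where a = "a j"] unfolding es_def by simp
  qed
  then obtain D where D: "\<And>j. 0 \<le> D j"
    "\<And>j x. - (real x / real (Suc j)) - D j \<le> real_of_int (path_weight A (es j) x)"
    using choice[of "\<lambda>j D. 0 \<le> D \<and> (\<forall>x. - (real x / real (Suc j)) - D \<le> real_of_int (path_weight A (es j) x))"]
    by blast
  have "\<forall>k. \<exists>x. 0 < x \<and> real (Suc k) * (\<Sum>j<Suc (Suc k). D j) \<le> real x \<and> a k + x \<in> S k"
    using recur unfolding S_def by (blast intro: infinite_nat_beyond)
  then obtain l where l: "\<And>k. 0 < l k" "\<And>k. real (Suc k) * (\<Sum>j<Suc (Suc k). D j) \<le> real (l k)"
    "\<And>k. a k + l k \<in> S k"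
    using choice[of "\<lambda>k x. 0 < x \<and> real (Suc k) * (\<Sum>j<Suc (Suc k). D j) \<le> real x \<and> a k + x \<in> S k"]
    by blast
  have init: "cs 0 0 = init_config A" using path unfolding cs_def a_def is_path_def by simp
  have "fst (es k (l k)) = fst (es (Suc k) 0)" for k
    using l(3)[of k] aS[of k] unfolding es_def S_def by simp
  moreover have "fst (es k m) = (snd (cs k m), hd (fst (cs k m)))" for k m
    using seg[of k] consistent_edge_source unfolding segment_def by blast
  ultimately have link: "snd (cs k (l k)) = snd (cs (Suc k) 0) \<and> hd (fst (cs k (l k))) = hd (fst (cs (Suc k) 0))" for k
    by (metis prod.inject)
  show ?thesis
    using glue_is_path[OF seg l(1) init link] glue_liminf_avg_nonneg[OF l(1) D l(2)] by blast
qed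

theorem lemma6:
  fixes A :: "('q, 'g) wps"
  assumes "wf_wps A"
  shows "(\<exists>c e. is_path A c e \<and> LimInfAvg A e \<ge> 0) \<longleftrightarrow>
         (\<forall>\<epsilon>::real. \<epsilon> > 0 \<longrightarrow> (\<exists>c e. is_path A c e \<and> LimInfAvg A e > ereal (- \<epsilon>)))"
proof
  assume "\<exists>c e. is_path A c e \<and> LimInfAvg A e \<ge> 0"
  then obtain c e where "is_path A c e" "0 \<le> LimInfAvg A e" by blast
  moreover have "ereal (- \<epsilon>) < 0" if "\<epsilon> > 0" for \<epsilon> using that by simp
  ultimately show "\<forall>\<epsilon>::real. \<epsilon> > 0 \<longrightarrow> (\<exists>c e. is_path A c e \<and> LimInfAvg A e > ereal (- \<epsilon>))"
    using order_less_le_trans by blast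
next
  assume H: "\<forall>\<epsilon>::real. \<epsilon> > 0 \<longrightarrow> (\<exists>c e. is_path A c e \<and> LimInfAvg A e > ereal (- \<epsilon>))"
  have "\<forall>n. \<exists>c e. is_path A c e \<and> LimInfAvg A e > ereal (- (1 / real (Suc n)))"
    using H by simp
  then obtain c e where ce: "\<And>n. is_path A (c n) (e n)"
    "\<And>n. ereal (- (1 / real (Suc n))) < LimInfAvg A (e n)" by (auto dest!: choice)
  have "\<forall>n. \<exists>T. T \<in> fst ` edges A \<and> infinite {a. stable (c n) a \<and> fst (e n a) = T}"
    using recurrent_stable_source[OF assms ce(1)] by blast
  from choice[OF this] obtain T where
    T: "\<And>n. T n \<in> fst ` edges A" "\<And>n. infinite {a. stable (c n) a \<and> fst (e n a) = T n}"
    by blast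
  obtain T0 g where g: "\<And>k. k \<le> g k" "\<And>k. T (g k) = T0"
    using pigeonhole_subsequence[OF finite_edge_sources[OF assms], of T] T(1) by blast
  have "ereal (- (1 / real (Suc k))) \<le> ereal (- (1 / real (Suc (g k))))" for k
    using g(1)[of k] by (simp add: frac_le)
  then have "ereal (- (1 / real (Suc k))) < LimInfAvg A (e (g k))" for k
    using ce(2)[of "g k"] by (rule order.strict_trans1)
  then show "\<exists>c e. is_path A c e \<and> 0 \<le> LimInfAvg A e"
    using glue_recurrent_paths[OF assms, of "\<lambda>k. c (g k)" "\<lambda>k. e (g k)" T0] ce(1) T(2) g(2)
    by metis
qed

end
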